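(* Let $n\ge3$, $\zeta=2\pi/n$, $m\in\mathbb{Z}$, $a>0$, $V$ smooth. For $k\in\{1,\dots,n\}$ and $z\in\mathbb{C}^2$ let $T_kz=n^{-1/2}\big(e^{(ikI+mJ)\zeta}z,e^{2(ikI+mJ)\zeta}z,\dots,e^{n(ikI+mJ)\zeta}z\big)\in\mathbb{C}^{2n}$. Let $\alpha_k=4\cos(m\zeta)\sin^2(k\zeta/2)$ and $\beta_k=2\sin(m\zeta)\sin(k\zeta)$. Then the Hessian satisfies $D^2H(\mathbf{a}_m)T_kz=T_kB_kz$, where $B_k$ is the $2\times2$ matrix $B_k=\mathrm{diag}(2a^2V''(a^2)-\alpha_k,-\alpha_k)+iJ\beta_k$.
   Context: $J=\begin{pmatrix}0&-1\\1&0\end{pmatrix}$, $I$ the $2\times2$ identity. $\omega=4\sin^2(m\zeta/2)-V'(a^2)$ and $H(u)=\frac12\sum_{j=1}^n\{V(|u_j|^2)+\omega|u_j|^2-|u_{j+1}-u_j|^2\}$ for $u=(u_1,\dots,u_n)\in(\mathbb{R}^2)^n$, indices mod $n$ (the Hamiltonian of the DNLS lattice $i\dot q_j=V'(|q_j|^2)q_j+(q_{j+1}-q_j)+(q_{j-1}-q_j)$ in rotating coordinates $q_j=e^{i\omega t}u_j$). $\mathbf{a}_m=(a_1,\dots,a_n)$ with $a_j=ae^{jm\zeta J}e_1$. The real $2n\times2n$ matrix $D^2H(\mathbf{a}_m)$ acts complex-linearly on $\mathbb{C}^{2n}$. *)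

theory Defs
  imports "HOL-Analysis.Analysis"
begin

text \<open>Lattice points u = (u_0,...,u_{n-1}), u_j in R^2; index j is the paper's index
  j taken mod n (paper: j = 1..n with u_{n+1} = u_1). Values of u at j >= n are irrelevant.\<close>

definition dnls_H :: "nat \<Rightarrow> (real \<Rightarrow> real) \<Rightarrow> real \<Rightarrow> (nat \<Rightarrow> real^2) \<Rightarrow> real" where
  "dnls_H n V \<omega> u = (1/2) * (\<Sum>j<n. V ((norm (u j))\<^sup>2) + \<omega> * (norm (u j))\<^sup>2
                                   - (norm (u (Suc j mod n) - u j))\<^sup>2)"

definition pderiv_coord :: "((nat \<Rightarrow> real^2) \<Rightarrow> real) \<Rightarrow> (nat \<Rightarrow> real^2) \<Rightarrow> nat \<times> 2 \<Rightarrow> real" where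
  "pderiv_coord f u lq = deriv (\<lambda>t. f (u(fst lq := u (fst lq) + t *\<^sub>R axis (snd lq) 1))) 0"

definition hessian :: "((nat \<Rightarrow> real^2) \<Rightarrow> real) \<Rightarrow> (nat \<Rightarrow> real^2) \<Rightarrow> nat \<times> 2 \<Rightarrow> nat \<times> 2 \<Rightarrow> real" where
  "hessian f u jp lq = pderiv_coord (\<lambda>v. pderiv_coord f v lq) u jp"

definition mat_act :: "nat \<Rightarrow> (nat \<times> 2 \<Rightarrow> nat \<times> 2 \<Rightarrow> real) \<Rightarrow> (nat \<Rightarrow> complex^2) \<Rightarrow> (nat \<Rightarrow> complex^2)" where
  "mat_act n M w = (\<lambda>j. \<chi> p. \<Sum>l<n. \<Sum>q\<in>UNIV. complex_of_real (M (j,p) (l,q)) * (w l $ q))"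

text \<open>Rotation e^{\<theta> J} acting on C^2 (J = [[0,-1],[1,0]]).\<close>
definition rotC :: "real \<Rightarrow> complex^2 \<Rightarrow> complex^2" where
  "rotC \<theta> z = vector [cos \<theta> * z$1 - sin \<theta> * z$2, sin \<theta> * z$1 + cos \<theta> * z$2]"

definition Jc :: "complex^2 \<Rightarrow> complex^2" where
  "Jc z = vector [- z$2, z$1]"

text \<open>The equilibrium a_m: a_j = a e^{j m \<zeta> J} e_1.\<close>
definition a_m :: "nat \<Rightarrow> int \<Rightarrow> real \<Rightarrow> nat \<Rightarrow> real^2" where
  "a_m n m a j = vector [a * cos (real j * of_int m * (2*pi/n)), a * sin (real j * of_int m * (2*pi/n))]"

text \<open>T_k z; the block e^{j(ikI+mJ)\<zeta>} z equals e^{ijk\<zeta>} e^{jm\<zeta>J} z since I and J commute.\<close>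
definition T_op :: "nat \<Rightarrow> int \<Rightarrow> nat \<Rightarrow> complex^2 \<Rightarrow> nat \<Rightarrow> complex^2" where
  "T_op n m k z j = (complex_of_real (1 / sqrt (real n)) * cis (real j * real k * (2*pi/n)))
      *s rotC (real j * of_int m * (2*pi/n)) z"

definition B_op :: "nat \<Rightarrow> int \<Rightarrow> real \<Rightarrow> (real \<Rightarrow> real) \<Rightarrow> nat \<Rightarrow> complex^2 \<Rightarrow> complex^2" where
  "B_op n m a V k z =
    (let \<zeta> = 2*pi/n;
         \<alpha> = 4 * cos (of_int m * \<zeta>) * (sin (real k * \<zeta> / 2))\<^sup>2;
         \<beta> = 2 * sin (of_int m * \<zeta>) * sin (real k * \<zeta>)
     in vector [complex_of_real (2 * a\<^sup>2 * deriv (deriv V) (a\<^sup>2) - \<alpha>) * z$1,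
                complex_of_real (- \<alpha>) * z$2]
        + (\<i> * complex_of_real \<beta>) *s Jc z)"

end

theory Submission
  imports Defs
begin

text \<open>
  The Hessian of \<open>H\<close> at any configuration \<open>u\<close> has the \<open>2\<times>2\<close> diagonal blocks
  \<open>2 V''(|u\<^sub>j|\<^sup>2) u\<^sub>j u\<^sub>j\<^sup>T + (V'(|u\<^sub>j|\<^sup>2) + \<omega> - 2) I\<close> and identity blocks coupling each
  site to its two neighbours on the ring. At the equilibrium \<open>a\<^sub>m\<close> all \<open>|a\<^sub>j| = a\<close>, and
  \<open>T\<^sub>k z\<close> is a discrete plane wave: at the neighbours \<open>j \<plusminus> 1\<close> its phase is shifted by
  \<open>\<plusminus>k\<zeta>\<close> and its rotation by \<open>\<plusminus>m\<zeta>\<close> (by \<open>n\<close>-periodicity also across the seam of the ring).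
  The angle addition formulas turn the sum of the two neighbour terms into
  \<open>2 cos(m\<zeta>) cos(k\<zeta>) + 2i sin(m\<zeta>) sin(k\<zeta>) J\<close> in the rotated frame, which together with
  \<open>V'(a\<^sup>2) + \<omega> - 2 = -2 cos(m\<zeta>)\<close> gives \<open>-\<alpha>\<^sub>k + i\<beta>\<^sub>k J\<close>; the rank-one term
  \<open>2V''(a\<^sup>2) a\<^sub>j a\<^sub>j\<^sup>T\<close> contributes \<open>2a\<^sup>2V''(a\<^sup>2)\<close> on the first component.
\<close>

lemma Suc_mod_eq_iff_eq_pred_mod:
  assumes "j < n" "l < n"
  shows "Suc j mod n = l \<longleftrightarrow> j = (l + n - 1) mod n"
  using assms by (cases l) (auto simp: mod_Suc)

lemma fun_upd_add_scaleR:
  fixes v :: "nat \<Rightarrow> 'a::real_vector"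
  shows "v(l := v l + s *\<^sub>R e) = (\<lambda>i. v i + s *\<^sub>R (if i = l then e else 0))"
  by auto

lemma axis_nth_if: "axis i x $ j = (if j = i then x else 0)"
  by (simp add: axis_def)

lemma sin_half_power2: "(sin (x / 2))\<^sup>2 = (1 - cos x) / 2"
  for x :: real
  using cos_double_sin[of "x / 2"] by simp

lemma cis_eq_cos_plus_i_sin: "cis x = complex_of_real (cos x) + \<i> * complex_of_real (sin x)"
  by (simp add: complex_eq_iff)

lemma power2_norm_add_scaleR:
  fixes x c :: "'a::real_inner"
  shows "(norm (x + s *\<^sub>R c))\<^sup>2 = (norm x)\<^sup>2 + 2 * s * (x \<bullet> c) + s\<^sup>2 * (norm c)\<^sup>2"
  unfolding power2_norm_eq_inner
  by (simp add: inner_add_left inner_add_right power2_eq_square algebra_simps inner_commute)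

lemma has_real_derivative_power2_norm_line:
  fixes x c :: "'a::real_inner"
  shows "((\<lambda>s. (norm (x + s *\<^sub>R c))\<^sup>2) has_real_derivative 2 * (x \<bullet> c)) (at 0)"
  unfolding power2_norm_add_scaleR by (auto intro!: derivative_eq_intros)

lemma has_real_derivative_comp_power2_norm_line:
  fixes x c :: "'a::real_inner"
  assumes "\<And>y. f differentiable (at y)"
  shows "((\<lambda>s. f ((norm (x + s *\<^sub>R c))\<^sup>2)) has_real_derivative deriv f ((norm x)\<^sup>2) * (2 * (x \<bullet> c))) (at 0)"
proof -
  have "(f has_real_derivative deriv f ((norm (x + 0 *\<^sub>R c))\<^sup>2)) (at ((norm (x + 0 *\<^sub>R c))\<^sup>2))"
    using assms DERIV_deriv_iff_real_differentiable by blast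
  from DERIV_chain2[OF this has_real_derivative_power2_norm_line] show ?thesis by simp
qed

lemma has_real_derivative_dnls_H_line:
  fixes v c :: "nat \<Rightarrow> real^2"
  assumes "\<And>x. V differentiable (at x)"
  shows "((\<lambda>s. dnls_H n V \<omega> (\<lambda>i. v i + s *\<^sub>R c i)) has_real_derivative
    (\<Sum>j<n. (deriv V ((norm (v j))\<^sup>2) + \<omega>) * (v j \<bullet> c j)
        - (v (Suc j mod n) - v j) \<bullet> (c (Suc j mod n) - c j))) (at 0)"
proof -
  have H: "dnls_H n V \<omega> (\<lambda>i. v i + s *\<^sub>R c i) = (1/2) * (\<Sum>j<n. V ((norm (v j + s *\<^sub>R c j))\<^sup>2)
     + \<omega> * (norm (v j + s *\<^sub>R c j))\<^sup>2
     - (norm ((v (Suc j mod n) - v j) + s *\<^sub>R (c (Suc j mod n) - c j)))\<^sup>2)" for s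
    unfolding dnls_H_def by (simp add: algebra_simps)
  have "((\<lambda>s. (1/2) * (\<Sum>j<n. V ((norm (v j + s *\<^sub>R c j))\<^sup>2)
     + \<omega> * (norm (v j + s *\<^sub>R c j))\<^sup>2
     - (norm ((v (Suc j mod n) - v j) + s *\<^sub>R (c (Suc j mod n) - c j)))\<^sup>2)) has_real_derivative
     (1/2) * (\<Sum>j<n. deriv V ((norm (v j))\<^sup>2) * (2 * (v j \<bullet> c j)) + \<omega> * (2 * (v j \<bullet> c j))
        - 2 * ((v (Suc j mod n) - v j) \<bullet> (c (Suc j mod n) - c j)))) (at 0)"
    by (intro DERIV_cmult DERIV_sum DERIV_diff DERIV_add
          has_real_derivative_comp_power2_norm_line has_real_derivative_power2_norm_line assms)
  then show ?thesis
    unfolding H by (simp add: sum_distrib_left algebra_simps)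
qed

definition dnls_grad :: "nat \<Rightarrow> (real \<Rightarrow> real) \<Rightarrow> real \<Rightarrow> nat \<Rightarrow> 2 \<Rightarrow> (nat \<Rightarrow> real^2) \<Rightarrow> real" where
  "dnls_grad n V \<omega> l q v = (deriv V ((norm (v l))\<^sup>2) + \<omega>) * v l $ q
     - (v l - v (Suc l mod n) + (v l - v ((l + n - 1) mod n))) $ q"

lemma pderiv_coord_dnls_H:
  fixes v :: "nat \<Rightarrow> real^2"
  assumes dV: "\<And>x. V differentiable (at x)" and l: "l < n"
  shows "pderiv_coord (dnls_H n V \<omega>) v (l,q) = dnls_grad n V \<omega> l q v"
proof -
  define c where "c = (\<lambda>i. if i = l then axis q (1::real) else 0)"
  have "pderiv_coord (dnls_H n V \<omega>) v (l,q) = deriv (\<lambda>s. dnls_H n V \<omega> (\<lambda>i. v i + s *\<^sub>R c i)) 0"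
    unfolding pderiv_coord_def c_def by (simp add: fun_upd_add_scaleR)
  also have "\<dots> = (\<Sum>j<n. (deriv V ((norm (v j))\<^sup>2) + \<omega>) * (v j \<bullet> c j))
        + (\<Sum>j<n. (v (Suc j mod n) - v j) \<bullet> c j) - (\<Sum>j<n. (v (Suc j mod n) - v j) \<bullet> c (Suc j mod n))"
    by (simp add: DERIV_imp_deriv[OF has_real_derivative_dnls_H_line[OF dV]]
        sum_subtractf inner_diff_right sum.distrib algebra_simps)
  also have "(\<Sum>j<n. (deriv V ((norm (v j))\<^sup>2) + \<omega>) * (v j \<bullet> c j)) = (deriv V ((norm (v l))\<^sup>2) + \<omega>) * v l $ q"
    using l by (simp add: c_def if_distrib inner_axis sum.If_cases)
  also have "(\<Sum>j<n. (v (Suc j mod n) - v j) \<bullet> c j) = (v (Suc l mod n) - v l) $ q"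
    using l by (simp add: c_def if_distrib inner_axis sum.If_cases)
  also have "(\<Sum>j<n. (v (Suc j mod n) - v j) \<bullet> c (Suc j mod n))
      = (\<Sum>j<n. if j = (l + n - 1) mod n then (v l - v j) $ q else 0)"
  proof (rule sum.cong)
    fix j assume "j \<in> {..<n}"
    then have "Suc j mod n = l \<longleftrightarrow> j = (l + n - 1) mod n"
      using Suc_mod_eq_iff_eq_pred_mod l by simp
    then show "(v (Suc j mod n) - v j) \<bullet> c (Suc j mod n) = (if j = (l + n - 1) mod n then (v l - v j) $ q else 0)"
      by (cases "Suc j mod n = l") (auto simp: c_def inner_axis)
  qed simp
  also have "\<dots> = (v l - v ((l + n - 1) mod n)) $ q"
    using l by simp
  finally show ?thesis unfolding dnls_grad_def by (simp add: algebra_simps)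
qed

lemma has_real_derivative_dnls_grad_line:
  fixes u c :: "nat \<Rightarrow> real^2"
  assumes "\<And>x. deriv V differentiable (at x)"
  shows "((\<lambda>t. dnls_grad n V \<omega> l q (\<lambda>i. u i + t *\<^sub>R c i)) has_real_derivative
     deriv (deriv V) ((norm (u l))\<^sup>2) * (2 * (u l \<bullet> c l)) * u l $ q
     + (deriv V ((norm (u l))\<^sup>2) + \<omega>) * c l $ q
     - (c l - c (Suc l mod n) + (c l - c ((l + n - 1) mod n))) $ q) (at 0)"
proof -
  define A where "A = (u l - u (Suc l mod n) + (u l - u ((l + n - 1) mod n))) $ q"
  define C where "C = (c l - c (Suc l mod n) + (c l - c ((l + n - 1) mod n))) $ q"
  have grad: "dnls_grad n V \<omega> l q (\<lambda>i. u i + t *\<^sub>R c i)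
      = (deriv V ((norm (u l + t *\<^sub>R c l))\<^sup>2) + \<omega>) * (u l $ q + t * c l $ q) - (A + t * C)" for t
    unfolding dnls_grad_def A_def C_def by (simp add: algebra_simps)
  have "((\<lambda>t. (deriv V ((norm (u l + t *\<^sub>R c l))\<^sup>2) + \<omega>) * (u l $ q + t * c l $ q) - (A + t * C))
      has_real_derivative
        (deriv (deriv V) ((norm (u l))\<^sup>2) * (2 * (u l \<bullet> c l)) + 0) * (u l $ q + 0 * c l $ q)
        + (0 + 1 * c l $ q) * (deriv V ((norm (u l + 0 *\<^sub>R c l))\<^sup>2) + \<omega>) - (0 + 1 * C)) (at 0)"
    by (intro DERIV_diff DERIV_mult DERIV_add DERIV_cmult_right DERIV_ident DERIV_const
          has_real_derivative_comp_power2_norm_line assms)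
  then show ?thesis
    unfolding grad C_def by (simp add: mult.commute)
qed

lemma hessian_dnls_H:
  fixes u :: "nat \<Rightarrow> real^2"
  assumes dV: "\<And>x. V differentiable (at x)" and dV': "\<And>x. deriv V differentiable (at x)"
    and l: "l < n"
  shows "hessian (dnls_H n V \<omega>) u (j,p) (l,q) =
     (if l = j then deriv (deriv V) ((norm (u l))\<^sup>2) * (2 * u l $ p) * u l $ q
         + (deriv V ((norm (u l))\<^sup>2) + \<omega> - 2) * (if q = p then 1 else 0) else 0)
     + (if Suc l mod n = j then (if q = p then 1 else 0) else 0)
     + (if (l + n - 1) mod n = j then (if q = p then 1 else 0) else 0)"
proof -
  define c where "c = (\<lambda>i. if i = j then axis p (1::real) else 0)"
  have grad: "(\<lambda>v. pderiv_coord (dnls_H n V \<omega>) v (l,q)) = dnls_grad n V \<omega> l q"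
    using pderiv_coord_dnls_H[OF dV l] by blast
  have "hessian (dnls_H n V \<omega>) u (j,p) (l,q) = deriv (\<lambda>t. dnls_grad n V \<omega> l q (\<lambda>i. u i + t *\<^sub>R c i)) 0"
    unfolding hessian_def grad unfolding pderiv_coord_def c_def by (simp add: fun_upd_add_scaleR)
  also have "\<dots> = deriv (deriv V) ((norm (u l))\<^sup>2) * (2 * (u l \<bullet> c l)) * u l $ q
     + (deriv V ((norm (u l))\<^sup>2) + \<omega>) * c l $ q
     - (c l - c (Suc l mod n) + (c l - c ((l + n - 1) mod n))) $ q"
    by (rule DERIV_imp_deriv[OF has_real_derivative_dnls_grad_line[OF dV']])
  also have "\<dots> = (if l = j then deriv (deriv V) ((norm (u l))\<^sup>2) * (2 * u l $ p) * u l $ q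
         + (deriv V ((norm (u l))\<^sup>2) + \<omega> - 2) * (if q = p then 1 else 0) else 0)
     + (if Suc l mod n = j then (if q = p then 1 else 0) else 0)
     + (if (l + n - 1) mod n = j then (if q = p then 1 else 0) else 0)"
    by (simp add: c_def inner_axis axis_nth_if algebra_simps)
  finally show ?thesis .
qed

lemma sum_lattice_kronecker:
  fixes w :: "nat \<Rightarrow> complex^2"
  assumes "i < n" and "\<And>l. l < n \<Longrightarrow> P l \<longleftrightarrow> l = i"
  shows "(\<Sum>l<n. \<Sum>q\<in>UNIV. complex_of_real (if P l then (if q = p then 1 else 0) else 0) * w l $ q)
    = w i $ p"
proof -
  have kronecker: "(\<Sum>q\<in>UNIV. complex_of_real (if q = p then 1 else 0) * x $ q) = x $ p" for x :: "complex^2"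
    using exhaust_2[of p] by (auto simp: sum_2)
  have "(\<Sum>l<n. \<Sum>q\<in>UNIV. complex_of_real (if P l then (if q = p then 1 else 0) else 0) * w l $ q)
      = (\<Sum>l<n. if l = i then w l $ p else 0)"
    using assms(2) by (intro sum.cong) (auto simp: kronecker)
  then show ?thesis
    using assms(1) by simp
qed

lemma sum_lattice_diagonal:
  fixes w :: "nat \<Rightarrow> complex^2" and F :: "nat \<Rightarrow> 2 \<Rightarrow> real"
  assumes "j < n"
  shows "(\<Sum>l<n. \<Sum>q\<in>UNIV. complex_of_real (if l = j then F l q else 0) * w l $ q)
     = (\<Sum>q\<in>UNIV. complex_of_real (F j q) * w j $ q)"
proof -
  have "(\<Sum>l<n. \<Sum>q\<in>UNIV. complex_of_real (if l = j then F l q else 0) * w l $ q)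
     = (\<Sum>l<n. if l = j then (\<Sum>q\<in>UNIV. complex_of_real (F l q) * w l $ q) else 0)"
    by (rule sum.cong) auto
  then show ?thesis
    using assms by simp
qed

lemma mat_act_hessian_dnls_H:
  fixes u :: "nat \<Rightarrow> real^2" and w :: "nat \<Rightarrow> complex^2"
  assumes dV: "\<And>x. V differentiable (at x)" and dV': "\<And>x. deriv V differentiable (at x)"
    and j: "j < n"
  shows "mat_act n (hessian (dnls_H n V \<omega>) u) w j $ p =
     complex_of_real (deriv (deriv V) ((norm (u j))\<^sup>2) * (2 * u j $ p))
       * (\<Sum>q\<in>UNIV. complex_of_real (u j $ q) * w j $ q)
     + complex_of_real (deriv V ((norm (u j))\<^sup>2) + \<omega> - 2) * w j $ p
     + w ((j + n - 1) mod n) $ p + w (Suc j mod n) $ p"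
proof -
  define F where "F = (\<lambda>l q. deriv (deriv V) ((norm (u l))\<^sup>2) * (2 * u l $ p) * u l $ q
         + (deriv V ((norm (u l))\<^sup>2) + \<omega> - 2) * (if q = p then 1 else (0::real)))"
  have n: "0 < n"
    using j by simp
  have pred_iff: "Suc l mod n = j \<longleftrightarrow> l = (j + n - 1) mod n" if "l < n" for l
    using Suc_mod_eq_iff_eq_pred_mod[OF that j] .
  have succ_iff: "(l + n - 1) mod n = j \<longleftrightarrow> l = Suc j mod n" if "l < n" for l
    using Suc_mod_eq_iff_eq_pred_mod[OF j that] by auto
  have pred: "(\<Sum>l<n. \<Sum>q\<in>UNIV.
      complex_of_real (if Suc l mod n = j then (if q = p then 1 else 0) else 0) * w l $ q)
      = w ((j + n - 1) mod n) $ p"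
    using n pred_iff by (intro sum_lattice_kronecker) auto
  have succ: "(\<Sum>l<n. \<Sum>q\<in>UNIV.
      complex_of_real (if (l + n - 1) mod n = j then (if q = p then 1 else 0) else 0) * w l $ q)
      = w (Suc j mod n) $ p"
    using n succ_iff by (intro sum_lattice_kronecker) auto
  have "mat_act n (hessian (dnls_H n V \<omega>) u) w j $ p =
     (\<Sum>l<n. \<Sum>q\<in>UNIV. complex_of_real (if l = j then F l q else 0) * w l $ q
       + complex_of_real (if Suc l mod n = j then (if q = p then 1 else 0) else 0) * w l $ q
       + complex_of_real (if (l + n - 1) mod n = j then (if q = p then 1 else 0) else 0) * w l $ q)"
    unfolding mat_act_def vec_lambda_beta
    by (intro sum.cong refl)
      (simp only: hessian_dnls_H[OF dV dV'] F_def distrib_right of_real_add lessThan_iff)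
  also have "\<dots> = (\<Sum>q\<in>UNIV. complex_of_real (F j q) * w j $ q)
      + w ((j + n - 1) mod n) $ p + w (Suc j mod n) $ p"
    by (simp only: sum.distrib sum_lattice_diagonal[OF j] pred succ)
  also have "(\<Sum>q\<in>UNIV. complex_of_real (F j q) * w j $ q) =
     complex_of_real (deriv (deriv V) ((norm (u j))\<^sup>2) * (2 * u j $ p))
       * (\<Sum>q\<in>UNIV. complex_of_real (u j $ q) * w j $ q)
     + complex_of_real (deriv V ((norm (u j))\<^sup>2) + \<omega> - 2) * w j $ p"
    using exhaust_2[of p] by (auto simp: F_def sum_2 algebra_simps)
  finally show ?thesis .
qed

text \<open>\<open>T_op\<close> with a real site index, so that sites can be shifted across the seam of the ring.\<close>

definition lattice_wave :: "nat \<Rightarrow> int \<Rightarrow> nat \<Rightarrow> complex^2 \<Rightarrow> real \<Rightarrow> complex^2" where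
  "lattice_wave n m k z x = (complex_of_real (1 / sqrt (real n)) * cis (x * real k * (2*pi/n)))
     *s rotC (x * of_int m * (2*pi/n)) z"

lemma T_op_eq_lattice_wave: "T_op n m k z j = lattice_wave n m k z (real j)"
  by (simp add: T_op_def lattice_wave_def)

lemma rotC_add_int_multiple_2pi: "rotC (\<theta> + 2 * pi * of_int m) z = rotC \<theta> z"
proof -
  have "cos (complex_of_real (\<theta> + 2 * pi * of_int m)) = cos (complex_of_real \<theta>)"
    and "sin (complex_of_real (\<theta> + 2 * pi * of_int m)) = sin (complex_of_real \<theta>)"
    by (simp_all only: cos_of_real sin_of_real) (simp_all add: cos_add sin_add)
  then show ?thesis
    unfolding rotC_def by simp
qed

lemma lattice_wave_add_period:
  assumes "n > 0"
  shows "lattice_wave n m k z (x + real n) = lattice_wave n m k z x"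
proof -
  have "(x + real n) * real k * (2*pi/n) = x * real k * (2*pi/n) + 2 * pi * real k"
    and "(x + real n) * of_int m * (2*pi/n) = x * of_int m * (2*pi/n) + 2 * pi * of_int m"
    using assms by (simp_all add: field_simps)
  moreover have "cis (\<phi> + 2 * pi * real k) = cis \<phi>" for \<phi>
    by (simp add: cis_mult[symmetric])
  ultimately show ?thesis
    unfolding lattice_wave_def by (simp only: rotC_add_int_multiple_2pi)
qed

lemma T_op_Suc_mod:
  assumes "j < n"
  shows "T_op n m k z (Suc j mod n) = lattice_wave n m k z (real j + 1)"
proof (cases "Suc j < n")
  case True
  then show ?thesis
    by (simp add: T_op_eq_lattice_wave add.commute)
next
  case False
  with assms have "Suc j = n"
    by simp
  then have "Suc j mod n = 0" "real j + 1 = real n" "n > 0"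
    by auto
  then show ?thesis
    using lattice_wave_add_period[of n m k z 0] by (simp add: T_op_eq_lattice_wave)
qed

lemma T_op_pred_mod:
  assumes "j < n"
  shows "T_op n m k z ((j + n - 1) mod n) = lattice_wave n m k z (real j - 1)"
proof (cases "j = 0")
  case True
  with assms have "real ((j + n - 1) mod n) = real j - 1 + real n"
    by (simp add: of_nat_diff)
  then show ?thesis
    using lattice_wave_add_period[of n m k z "real j - 1"] assms
    by (simp add: T_op_eq_lattice_wave)
next
  case False
  with assms have "(j + n - 1) mod n = j - 1"
    by (simp add: mod_if)
  then show ?thesis
    using False by (simp add: T_op_eq_lattice_wave of_nat_diff)
qed

lemma rotating_wave_hessian_identity:
  fixes z :: "complex^2" and c :: complex and a D2 \<phi> \<theta> \<kappa> \<mu> :: real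
  defines "W \<equiv> \<lambda>\<phi> \<theta> v. (c * cis \<phi>) *s rotC \<theta> v"
    and "\<alpha> \<equiv> 4 * cos \<mu> * (sin (\<kappa> / 2))\<^sup>2" and "\<beta> \<equiv> 2 * sin \<mu> * sin \<kappa>"
  shows "complex_of_real (D2 * (2 * (vector [a * cos \<theta>, a * sin \<theta>] :: real^2) $ p))
       * (complex_of_real (a * cos \<theta>) * W \<phi> \<theta> z $ 1 + complex_of_real (a * sin \<theta>) * W \<phi> \<theta> z $ 2)
     + complex_of_real (- 2 * cos \<mu>) * W \<phi> \<theta> z $ p
     + W (\<phi> - \<kappa>) (\<theta> - \<mu>) z $ p + W (\<phi> + \<kappa>) (\<theta> + \<mu>) z $ p
   = W \<phi> \<theta> (vector [complex_of_real (2 * a\<^sup>2 * D2 - \<alpha>) * z$1, complex_of_real (- \<alpha>) * z$2]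
        + (\<i> * complex_of_real \<beta>) *s Jc z) $ p"
proof -
  have \<alpha>: "\<alpha> = 2 * cos \<mu> * (1 - cos \<kappa>)"
    unfolding \<alpha>_def sin_half_power2 by simp
  have pythagoras: "complex_of_real (sin \<theta>) ^ 2 + complex_of_real (cos \<theta>) ^ 2 = 1"
    by (metis of_real_1 of_real_add of_real_power sin_cos_squared_add)
  have i2: "\<i> * \<i> = -1"
    by simp
  note expand = W_def rotC_def Jc_def \<alpha> \<beta>_def cis_eq_cos_plus_i_sin cos_add sin_add cos_diff sin_diff
    vector_2 vector_add_component vector_smult_component of_real_mult of_real_add of_real_diff
    of_real_minus of_real_numeral of_real_power of_real_1 cos_of_real sin_of_real
  from exhaust_2[of p] show ?thesis
  proof
    assume "p = 1"
    show ?thesis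
      by (simp only: expand \<open>p = 1\<close>) (use pythagoras i2 in algebra)
  next
    assume "p = 2"
    show ?thesis
      by (simp only: expand \<open>p = 2\<close>) (use pythagoras i2 in algebra)
  qed
qed

lemma mat_act_hessian_dnls_H_a_m_T_op:
  assumes dV: "\<And>x. V differentiable (at x)" and dV': "\<And>x. deriv V differentiable (at x)"
    and \<omega>: "deriv V (a\<^sup>2) + \<omega> - 2 = - 2 * cos (of_int m * (2*pi/n))"
    and j: "j < n"
  shows "mat_act n (hessian (dnls_H n V \<omega>) (a_m n m a)) (T_op n m k z) j = T_op n m k (B_op n m a V k z) j"
proof -
  let ?\<zeta> = "2*pi/n"
  let ?\<theta> = "real j * of_int m * ?\<zeta>" and ?\<phi> = "real j * real k * ?\<zeta>"
  let ?W = "\<lambda>\<phi> \<theta> v. (complex_of_real (1 / sqrt (real n)) * cis \<phi>) *s rotC \<theta> v"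
  have a_j: "a_m n m a j = vector [a * cos ?\<theta>, a * sin ?\<theta>]"
    by (simp add: a_m_def)
  have norm_a_j: "(norm (a_m n m a j))\<^sup>2 = a\<^sup>2"
    unfolding a_j power2_norm_eq_inner
    by (simp add: inner_vec_def sum_2 power_mult_distrib flip: power2_eq_square distrib_left)
  have pred: "T_op n m k z ((j + n - 1) mod n) = ?W (?\<phi> - real k * ?\<zeta>) (?\<theta> - of_int m * ?\<zeta>) z"
    unfolding T_op_pred_mod[OF j] lattice_wave_def by (simp only: left_diff_distrib mult_1)
  have succ: "T_op n m k z (Suc j mod n) = ?W (?\<phi> + real k * ?\<zeta>) (?\<theta> + of_int m * ?\<zeta>) z"
    unfolding T_op_Suc_mod[OF j] lattice_wave_def by (simp only: distrib_right mult_1)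
  have "mat_act n (hessian (dnls_H n V \<omega>) (a_m n m a)) (T_op n m k z) j $ p
      = T_op n m k (B_op n m a V k z) j $ p" for p
    unfolding mat_act_hessian_dnls_H[OF dV dV' j] norm_a_j \<omega> pred succ
    unfolding T_op_def B_op_def Let_def a_j sum_2 vector_2
    by (rule rotating_wave_hessian_identity)
  then show ?thesis
    by (simp add: vec_eq_iff)
qed

theorem proposition1:
  fixes n :: nat and m :: int and a :: real and V :: "real \<Rightarrow> real"
    and k :: nat and z :: "complex^2"
  assumes "n \<ge> 3" and "a > 0"
    and "\<And>i x. ((deriv ^^ i) V) differentiable (at x)"
    and "1 \<le> k" and "k \<le> n"
  shows "let \<zeta> = 2*pi/n;
             \<omega> = 4 * (sin (of_int m * \<zeta> / 2))\<^sup>2 - deriv V (a\<^sup>2)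
         in \<forall>j<n. mat_act n (hessian (dnls_H n V \<omega>) (a_m n m a)) (T_op n m k z) j
                   = T_op n m k (B_op n m a V k z) j"
proof -
  have dV: "\<And>x. V differentiable (at x)" and dV': "\<And>x. deriv V differentiable (at x)"
    using assms(3)[of 0] assms(3)[of 1] by simp_all
  define \<omega> where "\<omega> = 4 * (sin (of_int m * (2*pi/n) / 2))\<^sup>2 - deriv V (a\<^sup>2)"
  have "deriv V (a\<^sup>2) + \<omega> - 2 = - 2 * cos (of_int m * (2*pi/n))"
    unfolding \<omega>_def sin_half_power2 by (simp add: field_simps)
  then show ?thesis
    unfolding Let_def \<omega>_def[symmetric] using mat_act_hessian_dnls_H_a_m_T_op[OF dV dV'] by blast
qed

end
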